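(* Let $1\le n\le N$. For every $x$ at which $\mathscr C_{1,n}(x)$ and $\mathscr D_{1,n}(x)$ are defined, $\mathscr D_{1,n}(x)\neq0$, and $f_n(x)-1\notin\{0,-1,\dots,-(n-1)\}$, where $$f_n(x)=\frac{np(N-n+1)\,\mathscr C_{1,n}(x)}{\mathscr D_{1,n}(x)}-n+1,$$ one has $$\mathbb K_n(x)=p^{n-1}(-N)_{n-1}\,h_n(x)\sum_{k=0}^{n}\frac{(-n)_k(-x)_k\,(f_n(x))_k}{(-N)_k\,(f_n(x)-1)_k}\frac{p^{-k}}{k!},\qquad h_n(x)=-\big(p(N-n+1)\,\mathscr C_{1,n}(x)-\mathscr D_{1,n}(x)\big),$$ i.e. $\mathbb K_n(x)=p^{n-1}(-N)_{n-1}h_n(x)\,{}_3F_2\!\left(-n,-x,f_n(x);-N,f_n(x)-1;p^{-1}\right)$ (terminating series).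
   Context: Fix an integer $N\ge 1$ and $0<p<1$. Notation: $(a)_0=1$, $(a)_k=a(a+1)\cdots(a+k-1)$ (Pochhammer symbol); $[z]_0=1$, $[z]_k=z(z-1)\cdots(z-k+1)$ (falling factorial). For a function $f$, $\Delta f(x)=f(x+1)-f(x)$, $\nabla f(x)=f(x)-f(x-1)$, $\Delta^0$ is the identity and $\Delta^k=\Delta\circ\Delta^{k-1}$. For $0\le n\le N$ the monic Kravchuk polynomial is $K_n(x)=p^n(-N)_n\sum_{k=0}^{n}\frac{(-n)_k(-x)_k}{(-N)_k\,k!}p^{-k}$, and $K_{-1}=0$; these are monic of degree $n$ and orthogonal on $\{0,\dots,N\}$ with respect to the binomial weight $w(x)=\binom{N}{x}p^x(1-p)^{N-x}$, with $\|K_n\|^2=\sum_{x=0}^N K_n(x)^2w(x)=n!(-N)_np^n(p-1)^n$. For $1\le n\le N+1$ and integers $i,l\ge0$, $\mathscr K_{n-1}^{(i,l)}(x,y)=\sum_{k=0}^{n-1}\frac{\Delta^iK_k(x)\,\Delta^lK_k(y)}{\|K_k\|^2}$. Fix $\lambda,\mu>0$ and an integer $j\ge 0$. On real polynomials define $\langle f,g\rangle_{\lambda,\mu}=\sum_{x=0}^N f(x)g(x)w(x)+\lambda\Delta^jf(0)\Delta^jg(0)+\mu\Delta^jf(N)\Delta^jg(N)$. For $0\le n\le N$, $\mathbb K_n=\mathbb K_n^{(j)}$ is the monic polynomial of degree $n$ with $\langle\mathbb K_n,q\rangle_{\lambda,\mu}=0$ for all polynomials $q$ of degree $<n$ (Kravchuk–Sobolev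 polynomials). For $1\le n\le N$: $\mathscr A_n(x,y)=\frac{j!}{\|K_{n-1}\|^2[x-y]_{j+1}}\sum_{k=0}^{j}\frac{\Delta^kK_{n-1}(y)}{k!}[x-y]_k$, $\mathscr B_n(x,y)=-\frac{j!}{\|K_{n-1}\|^2[x-y]_{j+1}}\sum_{k=0}^{j}\frac{\Delta^kK_{n}(y)}{k!}[x-y]_k$; $k_{00}=\mathscr K^{(j,j)}_{n-1}(0,0)$, $k_{0N}=\mathscr K^{(j,j)}_{n-1}(0,N)$, $k_{N0}=\mathscr K^{(j,j)}_{n-1}(N,0)$, $k_{NN}=\mathscr K^{(j,j)}_{n-1}(N,N)$, $d_0=\Delta^jK_n(0)$, $d_N=\Delta^jK_n(N)$, $\delta_n=(1+\lambda k_{00})(1+\mu k_{NN})-\lambda\mu k_{0N}k_{N0}$ (which is nonzero), $\Phi_1(n)=\frac{d_0(1+\mu k_{NN})-\mu k_{0N}d_N}{\delta_n}$, $\Phi_2(n)=\frac{(1+\lambda k_{00})d_N-\lambda k_{N0}d_0}{\delta_n}$; $\mathscr C_{1,n}(x)=1-\lambda\Phi_1(n)\mathscr A_n(x,0)-\mu\Phi_2(n)\mathscr A_n(x,N)$ and $\mathscr D_{1,n}(x)=-\lambda\Phi_1(n)\mathscr B_n(x,0)-\mu\Phi_2(n)\mathscr B_n(x,N)$. *)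

theory Defs
  imports Complex_Main "HOL-Computational_Algebra.Polynomial"
begin

definition falling :: "real \<Rightarrow> nat \<Rightarrow> real" where
  "falling z k = (\<Prod>i<k. z - real i)"

definition fdiff :: "nat \<Rightarrow> (real \<Rightarrow> real) \<Rightarrow> real \<Rightarrow> real" where
  "fdiff k f = ((\<lambda>g. \<lambda>x. g (x + 1) - g x) ^^ k) f"

definition binw :: "nat \<Rightarrow> real \<Rightarrow> nat \<Rightarrow> real" where
  "binw N p x = real (N choose x) * p ^ x * (1 - p) ^ (N - x)"

text \<open>Monic Kravchuk polynomial K_n(x) (for 0 <= n <= N).\<close>
definition kraw :: "nat \<Rightarrow> real \<Rightarrow> nat \<Rightarrow> real \<Rightarrow> real" where
  "kraw N p n x = p ^ n * pochhammer (- real N) n *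
     (\<Sum>k\<le>n. pochhammer (- real n) k * pochhammer (- x) k
              / (pochhammer (- real N) k * fact k) * (1 / p) ^ k)"

definition krawnorm :: "nat \<Rightarrow> real \<Rightarrow> nat \<Rightarrow> real" where
  "krawnorm N p n = (\<Sum>x\<le>N. (kraw N p n (real x))^2 * binw N p x)"

definition kernel :: "nat \<Rightarrow> real \<Rightarrow> nat \<Rightarrow> nat \<Rightarrow> nat \<Rightarrow> real \<Rightarrow> real \<Rightarrow> real" where
  "kernel N p n i l x y = (\<Sum>k<n. fdiff i (kraw N p k) x * fdiff l (kraw N p k) y / krawnorm N p k)"

definition sobIP :: "nat \<Rightarrow> real \<Rightarrow> real \<Rightarrow> real \<Rightarrow> nat \<Rightarrow> real poly \<Rightarrow> real poly \<Rightarrow> real" where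
  "sobIP N p lam mu j f g =
     (\<Sum>x\<le>N. poly f (real x) * poly g (real x) * binw N p x)
     + lam * fdiff j (poly f) 0 * fdiff j (poly g) 0
     + mu * fdiff j (poly f) (real N) * fdiff j (poly g) (real N)"

definition KS :: "nat \<Rightarrow> real \<Rightarrow> real \<Rightarrow> real \<Rightarrow> nat \<Rightarrow> nat \<Rightarrow> real poly" where
  "KS N p lam mu j n = (THE q. degree q = n \<and> lead_coeff q = 1 \<and>
       (\<forall>r. degree r < n \<longrightarrow> sobIP N p lam mu j q r = 0))"

definition calA :: "nat \<Rightarrow> real \<Rightarrow> nat \<Rightarrow> nat \<Rightarrow> real \<Rightarrow> real \<Rightarrow> real" where
  "calA N p j n x y = fact j / (krawnorm N p (n - 1) * falling (x - y) (j + 1)) *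
     (\<Sum>k\<le>j. fdiff k (kraw N p (n - 1)) y / fact k * falling (x - y) k)"

definition calB :: "nat \<Rightarrow> real \<Rightarrow> nat \<Rightarrow> nat \<Rightarrow> real \<Rightarrow> real \<Rightarrow> real" where
  "calB N p j n x y = - (fact j / (krawnorm N p (n - 1) * falling (x - y) (j + 1)) *
     (\<Sum>k\<le>j. fdiff k (kraw N p n) y / fact k * falling (x - y) k))"

definition deltaS :: "nat \<Rightarrow> real \<Rightarrow> real \<Rightarrow> real \<Rightarrow> nat \<Rightarrow> nat \<Rightarrow> real" where
  "deltaS N p lam mu j n =
     (1 + lam * kernel N p n j j 0 0) * (1 + mu * kernel N p n j j (real N) (real N))
     - lam * mu * kernel N p n j j 0 (real N) * kernel N p n j j (real N) 0"

definition Phi1 :: "nat \<Rightarrow> real \<Rightarrow> real \<Rightarrow> real \<Rightarrow> nat \<Rightarrow> nat \<Rightarrow> real" where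
  "Phi1 N p lam mu j n =
     (fdiff j (kraw N p n) 0 * (1 + mu * kernel N p n j j (real N) (real N))
      - mu * kernel N p n j j 0 (real N) * fdiff j (kraw N p n) (real N)) / deltaS N p lam mu j n"

definition Phi2 :: "nat \<Rightarrow> real \<Rightarrow> real \<Rightarrow> real \<Rightarrow> nat \<Rightarrow> nat \<Rightarrow> real" where
  "Phi2 N p lam mu j n =
     ((1 + lam * kernel N p n j j 0 0) * fdiff j (kraw N p n) (real N)
      - lam * kernel N p n j j (real N) 0 * fdiff j (kraw N p n) 0) / deltaS N p lam mu j n"

definition calC1 :: "nat \<Rightarrow> real \<Rightarrow> real \<Rightarrow> real \<Rightarrow> nat \<Rightarrow> nat \<Rightarrow> real \<Rightarrow> real" where
  "calC1 N p lam mu j n x = 1 - lam * Phi1 N p lam mu j n * calA N p j n x 0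
                              - mu * Phi2 N p lam mu j n * calA N p j n x (real N)"

definition calD1 :: "nat \<Rightarrow> real \<Rightarrow> real \<Rightarrow> real \<Rightarrow> nat \<Rightarrow> nat \<Rightarrow> real \<Rightarrow> real" where
  "calD1 N p lam mu j n x = - lam * Phi1 N p lam mu j n * calB N p j n x 0
                              - mu * Phi2 N p lam mu j n * calB N p j n x (real N)"

end

theory Submission
  imports Defs
begin

(* The Sobolev terms only involve Delta^j at the endpoints 0 and N, so orthogonality against
   lower-degree polynomials forces
     KS_n(x) = K_n(x) - lam Phi1 K^(0,j)_(n-1)(x,0) - mu Phi2 K^(0,j)_(n-1)(x,N),
   where Phi1, Phi2 solve a 2x2 system whose determinant delta_n is positive by Cauchy-Schwarz.
   The Christoffel-Darboux formula writes the kernel K_(n-1)(x,y) as (K_n(x) K_(n-1)(y) -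
   K_(n-1)(x) K_n(y)) / ((x - y) ||K_(n-1)||^2); a discrete Leibniz rule for Delta^j of G(t)/(x - t)
   then gives K^(0,j)_(n-1)(x,y) = A_n(x,y) K_n(x) + B_n(x,y) K_(n-1)(x).  Hence
   KS_n(x) = C_(1,n)(x) K_n(x) + D_(1,n)(x) K_(n-1)(x), and the contiguity relation
   (f)_k / (f - 1)_k = 1 + k / (f - 1) merges these two Kravchuk series into the single 3F2.
   Orthogonality of the Kravchuk polynomials is derived from the binomial moments
   sum_x (-x)_k (x - N)_m w(x) = (-N)_(k+m) p^k (1 - p)^m. *)

section \<open>Forward differences\<close>

lemma fdiff_0 [simp]: "fdiff 0 f = f"
  by (simp add: fdiff_def)

lemma fdiff_Suc: "fdiff (Suc j) f x = fdiff j f (x + 1) - fdiff j f x"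
  by (simp add: fdiff_def)

lemma fdiff_diff: "fdiff j (\<lambda>x. f x - g x) y = fdiff j f y - fdiff j g y"
  by (induction j arbitrary: y) (simp_all add: fdiff_Suc)

lemma fdiff_cmult: "fdiff j (\<lambda>x. c * f x) y = c * fdiff j f y"
  by (induction j arbitrary: y) (simp_all add: fdiff_Suc right_diff_distrib)

lemma fdiff_sum: "fdiff j (\<lambda>x. \<Sum>k\<in>A. f k x) y = (\<Sum>k\<in>A. fdiff j (f k) y)"
  by (induction j arbitrary: y) (simp_all add: fdiff_Suc sum_subtractf)

lemma fdiff_cong:
  assumes "\<And>i. i \<le> j \<Longrightarrow> f (y + real i) = g (y + real i)"
  shows "fdiff j f y = fdiff j g y"
  using assms
proof (induction j arbitrary: y)
  case 0
  then show ?case using 0[of 0] by simp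
next
  case (Suc j)
  have "fdiff j f (y + 1) = fdiff j g (y + 1)"
    using Suc.prems[of "Suc _"] by (intro Suc.IH) (simp add: add.assoc)
  moreover have "fdiff j f y = fdiff j g y"
    using Suc.prems by (intro Suc.IH) simp
  ultimately show ?case by (simp add: fdiff_Suc)
qed

lemma falling_Suc: "falling z (Suc k) = falling z k * (z - real k)"
  by (simp add: falling_def)

lemma falling_Suc_left: "falling z (Suc k) = z * falling (z - 1) k"
  unfolding falling_def prod.lessThan_Suc_shift by (simp add: algebra_simps)

lemma falling_factor_nonzero:
  assumes "falling z (j + 1) \<noteq> 0" "i \<le> j"
  shows "z - real i \<noteq> 0"
  using assms unfolding falling_def by (auto simp: prod_zero_iff)

lemma divide_fact_Suc: "a / fact j = real (Suc j) * (a / fact (Suc j) :: real)"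
  by (simp add: field_simps del: of_nat_Suc)

lemma sum_shifted_falling:
  fixes g :: "nat \<Rightarrow> real"
  shows "(\<Sum>k\<le>j. (g k + g (Suc k)) / fact k * falling z (Suc k))
       = z * (\<Sum>k\<le>j. g k / fact k * falling z k) + g (Suc j) / fact j * falling z (Suc j)"
proof (induction j)
  case 0
  then show ?case by (simp add: falling_def algebra_simps)
next
  case (Suc j)
  have "g (Suc j) / fact j * falling z (Suc j)
        + (g (Suc j) + g (Suc (Suc j))) / fact (Suc j) * falling z (Suc (Suc j))
      = z * (g (Suc j) / fact (Suc j) * falling z (Suc j))
        + g (Suc (Suc j)) / fact (Suc j) * falling z (Suc (Suc j))"
    unfolding falling_Suc[of z "Suc j"] divide_fact_Suc[of "g (Suc j)" j]
    by (simp add: add_divide_distrib algebra_simps del: of_nat_Suc fact_Suc)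
  then show ?case
    using Suc.IH by (simp add: distrib_left)
qed

lemma falling_sum_recurrence:
  fixes g :: "nat \<Rightarrow> real"
  shows "z * (\<Sum>k\<le>j. (g k + g (Suc k)) / fact k * falling (z - 1) k)
           - (z - real (Suc j)) * (\<Sum>k\<le>j. g k / fact k * falling z k)
       = real (Suc j) * (\<Sum>k\<le>Suc j. g k / fact k * falling z k)"
proof -
  have "z * (\<Sum>k\<le>j. (g k + g (Suc k)) / fact k * falling (z - 1) k)
      = (\<Sum>k\<le>j. (g k + g (Suc k)) / fact k * falling z (Suc k))"
    by (simp add: sum_distrib_left falling_Suc_left mult.left_commute)
  also have "\<dots> = z * (\<Sum>k\<le>j. g k / fact k * falling z k) + g (Suc j) / fact j * falling z (Suc j)"
    by (rule sum_shifted_falling)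
  finally show ?thesis
    unfolding divide_fact_Suc[of "g (Suc j)" j] by (simp add: algebra_simps del: of_nat_Suc fact_Suc)
qed

lemma fdiff_divide_linear:
  assumes "falling (x - y) (j + 1) \<noteq> 0"
  shows "fdiff j (\<lambda>t. G t / (x - t)) y =
     fact j / falling (x - y) (j + 1) * (\<Sum>k\<le>j. fdiff k G y / fact k * falling (x - y) k)"
  using assms
proof (induction j arbitrary: y)
  case 0
  then show ?case by (simp add: falling_def)
next
  case (Suc j)
  define z where "z = x - y"
  define F where "F = falling z (Suc (Suc j))"
  have F: "F \<noteq> 0" "F = z * falling (z - 1) (Suc j)" "F = falling z (Suc j) * (z - real (Suc j))"
    using Suc.prems falling_Suc_left[of z "Suc j"] falling_Suc[of z "Suc j"]
    by (simp_all add: F_def z_def del: falling_Suc_left falling_Suc)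
  have nz: "z \<noteq> 0" "falling (z - 1) (Suc j) \<noteq> 0" "falling z (Suc j) \<noteq> 0" "z - real (Suc j) \<noteq> 0"
    using F by auto
  have "fdiff j (\<lambda>t. G t / (x - t)) (y + 1)
      = fact j / falling (z - 1) (Suc j) * (\<Sum>k\<le>j. fdiff k G (y + 1) / fact k * falling (z - 1) k)"
    using Suc.IH[of "y + 1"] nz(2) by (simp add: z_def diff_diff_eq)
  moreover have "fdiff j (\<lambda>t. G t / (x - t)) y
      = fact j / falling z (Suc j) * (\<Sum>k\<le>j. fdiff k G y / fact k * falling z k)"
    using Suc.IH[of y] nz(3) by (simp add: z_def)
  moreover have "fact j / falling (z - 1) (Suc j) = fact j * z / F"
    unfolding F(2) using nz by simp
  moreover have "fact j / falling z (Suc j) = fact j * (z - real (Suc j)) / F"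
    unfolding F(3) using nz by simp
  ultimately have "fdiff (Suc j) (\<lambda>t. G t / (x - t)) y = fact j / F *
      (z * (\<Sum>k\<le>j. fdiff k G (y + 1) / fact k * falling (z - 1) k)
        - (z - real (Suc j)) * (\<Sum>k\<le>j. fdiff k G y / fact k * falling z k))"
    using F(1) by (simp add: fdiff_Suc field_simps)
  also have "\<dots> = fact j / F * (real (Suc j) * (\<Sum>k\<le>Suc j. fdiff k G y / fact k * falling z k))"
    using falling_sum_recurrence[of z "\<lambda>k. fdiff k G y" j] by (simp add: fdiff_Suc add.commute)
  finally show ?case
    by (simp add: F_def z_def)
qed

section \<open>Polynomial spaces and the binomial inner product\<close>

text \<open>Unlike
  \<open>degree q < n\<close>, this is meaningful for \<open>n = 0\<close>, where it forces \<open>q = 0\<close>.\<close>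
definition deg_below :: "real poly \<Rightarrow> nat \<Rightarrow> bool" where
  "deg_below q n \<longleftrightarrow> (\<forall>i\<ge>n. coeff q i = 0)"

lemma deg_below_zero_eq: "deg_below q 0 \<Longrightarrow> q = 0"
  by (rule poly_eqI) (simp add: deg_below_def)

lemma deg_below_diff: "deg_below a n \<Longrightarrow> deg_below b n \<Longrightarrow> deg_below (a - b) n"
  by (simp add: deg_below_def)

lemma deg_below_smult: "deg_below a n \<Longrightarrow> deg_below (smult c a) n"
  by (simp add: deg_below_def)

lemma deg_below_mono: "deg_below a m \<Longrightarrow> m \<le> n \<Longrightarrow> deg_below a n"
  by (simp add: deg_below_def)

lemma deg_below_sum: "(\<And>k. k \<in> A \<Longrightarrow> deg_below (f k) n) \<Longrightarrow> deg_below (\<Sum>k\<in>A. f k) n"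
  by (simp add: deg_below_def coeff_sum)

lemma deg_below_if_degree_less: "degree a < n \<Longrightarrow> deg_below a n"
  by (simp add: deg_below_def coeff_eq_0)

lemma degree_less_if_deg_below:
  assumes "deg_below a n" "1 \<le> n"
  shows "degree a < n"
proof -
  have "degree a \<le> n - 1" using assms by (intro degree_le) (auto simp: deg_below_def)
  then show ?thesis using assms(2) by simp
qed

lemma deg_below_linear_mult: "deg_below a n \<Longrightarrow> deg_below ([:c, 1:] * a) (Suc n)"
  by (auto simp: deg_below_def coeff_pCons')

lemma poly_pochhammer: "poly (pochhammer q i) x = pochhammer (poly q x) i"
  by (induction i) (simp_all add: pochhammer_Suc)

lemma pochhammer_linear_Suc:
  fixes a b :: real
  shows "pochhammer [:a, b:] (Suc i) = smult (a + of_nat i) (pochhammer [:a, b:] i) + pCons 0 (smult b (pochhammer [:a, b:] i))"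
  by (simp add: pochhammer_Suc of_nat_poly)

lemma deg_below_pochhammer_linear:
  fixes a b :: real
  shows "deg_below (pochhammer [:a, b:] i) (Suc i)"
  by (induction i) (auto simp: deg_below_def coeff_pCons' pochhammer_linear_Suc)

lemma coeff_pochhammer_linear_top:
  fixes a b :: real
  shows "coeff (pochhammer [:a, b:] i) i = b ^ i"
proof (induction i)
  case (Suc i)
  then show ?case
    using deg_below_pochhammer_linear[of a b i]
    by (simp add: pochhammer_linear_Suc deg_below_def)
qed simp

lemma deg_below_triangular_span:
  fixes B :: "nat \<Rightarrow> real poly"
  assumes "\<And>m. m < n \<Longrightarrow> deg_below (B m) (Suc m) \<and> coeff (B m) m = 1"
    and "deg_below s n"
  shows "\<exists>a. s = (\<Sum>m<n. smult (a m) (B m))"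
  using assms
proof (induction n arbitrary: s)
  case 0
  then show ?case using deg_below_zero_eq by auto
next
  case (Suc n)
  have B: "deg_below (B n) (Suc n)" "coeff (B n) n = 1"
    using Suc.prems(1)[of n] by auto
  have "deg_below (s - smult (coeff s n) (B n)) n"
    unfolding deg_below_def
  proof (intro allI impI)
    fix i assume "n \<le> i"
    then consider "i = n" | "Suc n \<le> i" by linarith
    then show "coeff (s - smult (coeff s n) (B n)) i = 0"
      by cases (use Suc.prems(2) B in \<open>simp_all add: deg_below_def\<close>)
  qed
  then obtain a where a: "s - smult (coeff s n) (B n) = (\<Sum>m<n. smult (a m) (B m))"
    using Suc.IH Suc.prems(1) by force
  have "(\<Sum>m<n. smult (a m) (B m)) = (\<Sum>m<n. smult ((a(n := coeff s n)) m) (B m))"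
    by (rule sum.cong) auto
  then have "s = (\<Sum>m<Suc n. smult ((a(n := coeff s n)) m) (B m))"
    using a by (simp add: algebra_simps)
  then show ?case by blast
qed

definition bin_inner :: "nat \<Rightarrow> real \<Rightarrow> (real \<Rightarrow> real) \<Rightarrow> (real \<Rightarrow> real) \<Rightarrow> real" where
  "bin_inner N p f g = (\<Sum>x\<le>N. f (real x) * g (real x) * binw N p x)"

lemma bin_inner_commute: "bin_inner N p f g = bin_inner N p g f"
  unfolding bin_inner_def by (simp add: mult.commute)

lemma bin_inner_sum_left:
  "bin_inner N p (\<lambda>x. \<Sum>k\<in>A. c k * f k x) g = (\<Sum>k\<in>A. c k * bin_inner N p (f k) g)"
proof -
  have "bin_inner N p (\<lambda>x. \<Sum>k\<in>A. c k * f k x) g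
      = (\<Sum>x\<le>N. \<Sum>k\<in>A. c k * (f k (real x) * g (real x) * binw N p x))"
    unfolding bin_inner_def by (simp add: sum_distrib_right mult.assoc)
  also have "\<dots> = (\<Sum>k\<in>A. c k * bin_inner N p (f k) g)"
    unfolding bin_inner_def by (subst sum.swap) (simp add: sum_distrib_left)
  finally show ?thesis .
qed

lemma bin_inner_poly_sum_left:
  "bin_inner N p (poly (\<Sum>k\<in>A. smult (c k) (q k))) g = (\<Sum>k\<in>A. c k * bin_inner N p (poly (q k)) g)"
proof -
  have "poly (\<Sum>k\<in>A. smult (c k) (q k)) = (\<lambda>x. \<Sum>k\<in>A. c k * poly (q k) x)"
    by (rule ext) (simp add: poly_sum)
  then show ?thesis by (simp add: bin_inner_sum_left)
qed

lemma bin_inner_poly_sum_right: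
  "bin_inner N p g (poly (\<Sum>k\<in>A. smult (c k) (q k))) = (\<Sum>k\<in>A. c k * bin_inner N p g (poly (q k)))"
  unfolding bin_inner_commute[of N p g] by (rule bin_inner_poly_sum_left)

lemma bin_inner_poly_diff_left:
  "bin_inner N p (poly (a - b)) g = bin_inner N p (poly a) g - bin_inner N p (poly b) g"
  unfolding bin_inner_def by (simp add: sum_subtractf[symmetric] algebra_simps)

lemma bin_inner_poly_add_left:
  "bin_inner N p (poly (a + b)) g = bin_inner N p (poly a) g + bin_inner N p (poly b) g"
  unfolding bin_inner_def by (simp add: sum.distrib[symmetric] algebra_simps)

lemma bin_inner_poly_add_right:
  "bin_inner N p f (poly (a + b)) = bin_inner N p f (poly a) + bin_inner N p f (poly b)"
  unfolding bin_inner_def by (simp add: sum.distrib[symmetric] algebra_simps)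

lemma bin_inner_poly_smult_left:
  "bin_inner N p (poly (smult c a)) g = c * bin_inner N p (poly a) g"
  unfolding bin_inner_def by (simp add: sum_distrib_left algebra_simps)

lemma bin_inner_poly_linear_mult:
  "bin_inner N p (poly ([:c, 1:] * a)) (poly b) = bin_inner N p (poly a) (poly ([:c, 1:] * b))"
  unfolding bin_inner_def by (simp add: algebra_simps)

lemma binw_pos: "0 < p \<Longrightarrow> p < 1 \<Longrightarrow> x \<le> N \<Longrightarrow> 0 < binw N p x"
  unfolding binw_def by simp

lemma bin_inner_self_nonneg: "0 < p \<Longrightarrow> p < 1 \<Longrightarrow> 0 \<le> bin_inner N p f f"
  unfolding bin_inner_def by (intro sum_nonneg) (simp add: binw_pos less_imp_le)

text \<open>A polynomial of degree \<open>\<le> N\<close> is determined by its values on the support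
  \<open>{0, \<dots>, N}\<close> of the weight.\<close>
lemma bin_inner_poly_self_eq_0:
  assumes "0 < p" "p < 1" "deg_below q (Suc N)" "bin_inner N p (poly q) (poly q) = 0"
  shows "q = 0"
proof (rule ccontr)
  assume q: "q \<noteq> 0"
  have "poly q (real x) = 0" if "x \<le> N" for x
  proof -
    have "\<forall>i\<in>{..N}. poly q (real i) * poly q (real i) * binw N p i = 0"
      using assms by (subst sum_nonneg_eq_0_iff[symmetric])
        (simp_all add: bin_inner_def binw_pos less_imp_le)
    then show ?thesis using that binw_pos[OF assms(1,2) that] by force
  qed
  then have "real ` {..N} \<subseteq> {x. poly q x = 0}" by auto
  then have "card (real ` {..N}) \<le> card {x. poly q x = 0}"
    by (intro card_mono poly_roots_finite q)
  also have "\<dots> \<le> degree q" by (rule card_poly_roots_bound[OF q])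
  also have "\<dots> < Suc N" using degree_less_if_deg_below[OF assms(3)] by simp
  finally show False by (simp add: card_image inj_on_def)
qed

section \<open>Binomial moments\<close>

lemma alternating_binomial_sum_Suc:
  fixes g :: "nat \<Rightarrow> real"
  shows "(\<Sum>k\<le>Suc n. (-1) ^ k * real (Suc n choose k) * g k)
       = - (\<Sum>k\<le>n. (-1) ^ k * real (n choose k) * (g (Suc k) - g k))"
proof -
  have A: "(\<Sum>k\<le>Suc n. (-1) ^ k * real (Suc n choose k) * g k)
     = g 0 - (\<Sum>k\<le>n. (-1) ^ k * real (n choose k) * g (Suc k))
           - (\<Sum>k\<le>n. (-1) ^ k * real (n choose Suc k) * g (Suc k))"
  proof -
    have "(-1) ^ Suc k * real (Suc n choose Suc k) * g (Suc k)
       = - ((-1) ^ k * real (n choose k) * g (Suc k)) - (-1) ^ k * real (n choose Suc k) * g (Suc k)" for k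
      by (simp add: algebra_simps)
    then show ?thesis
      by (subst sum.atMost_Suc_shift) (simp only: sum_subtractf sum_negf, simp)
  qed
  have B: "(\<Sum>k\<le>n. (-1) ^ k * real (n choose k) * g k)
     = g 0 - (\<Sum>k\<le>n. (-1) ^ k * real (n choose Suc k) * g (Suc k))"
  proof -
    have "(\<Sum>k\<le>n. (-1) ^ k * real (n choose k) * g k)
        = (\<Sum>k<Suc n. (-1) ^ k * real (n choose k) * g k)"
      by (simp add: lessThan_Suc_atMost)
    also have "\<dots> = g 0 + (\<Sum>k<n. (-1) ^ Suc k * real (n choose Suc k) * g (Suc k))"
      by (subst sum.lessThan_Suc_shift) simp
    also have "(\<Sum>k<n. (-1) ^ Suc k * real (n choose Suc k) * g (Suc k))
       = (\<Sum>k\<le>n. (-1) ^ Suc k * real (n choose Suc k) * g (Suc k))"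
      by (simp add: lessThan_Suc_atMost[symmetric])
    finally show ?thesis by (simp add: sum_negf[symmetric])
  qed
  have C: "(\<Sum>k\<le>n. (-1) ^ k * real (n choose k) * (g (Suc k) - g k))
     = (\<Sum>k\<le>n. (-1) ^ k * real (n choose k) * g (Suc k)) - (\<Sum>k\<le>n. (-1) ^ k * real (n choose k) * g k)"
    by (simp add: sum_subtractf[symmetric] right_diff_distrib)
  show ?thesis
    unfolding A C B by simp
qed

lemma pochhammer_forward_difference:
  "pochhammer (a + 1) (Suc m) - pochhammer a (Suc m) = real (Suc m) * pochhammer (a + 1 :: real) m"
  by (simp only: pochhammer_rec[of a] pochhammer_Suc[of "a + 1"]) (simp add: algebra_simps)

text \<open>The \<open>n\<close>-th finite difference of a polynomial of degree \<open>< n\<close> vanishes.\<close>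
lemma alternating_binomial_sum_pochhammer:
  "m < n \<Longrightarrow> (\<Sum>k\<le>n. (-1) ^ k * real (n choose k) * pochhammer (a + real k) m) = 0"
proof (induction n arbitrary: a m)
  case (Suc n)
  show ?case
  proof (cases m)
    case 0
    then show ?thesis unfolding alternating_binomial_sum_Suc by simp
  next
    case (Suc m')
    have "pochhammer (a + real (Suc k)) m - pochhammer (a + real k) m
        = real m * pochhammer (a + 1 + real k) m'" for k
      using pochhammer_forward_difference[of "a + real k" m'] Suc by (simp add: algebra_simps)
    moreover have "(\<Sum>k\<le>n. (-1) ^ k * real (n choose k) * pochhammer (a + 1 + real k) m') = 0"
      using Suc.IH[of m' "a + 1"] Suc.prems Suc by simp
    ultimately show ?thesis
      unfolding alternating_binomial_sum_Suc
      by (simp add: sum_distrib_left[symmetric] mult.left_commute)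
  qed
qed simp

lemma pochhammer_minus_of_nat: "pochhammer (- real a) k = (-1) ^ k * fact k * real (a choose k)"
proof -
  have "real (a choose k) = (-1) ^ k * pochhammer (- real a) k / fact k"
    by (simp add: binomial_gbinomial gbinomial_pochhammer)
  then show ?thesis by (simp flip: power_add)
qed

lemma choose_mult_three:
  assumes "k \<le> x" "x + m \<le> N"
  shows "(N choose x) * (x choose k) * ((N - x) choose m)
       = (N choose (k + m)) * ((k + m) choose k) * ((N - k - m) choose (x - k))"
proof -
  define A where "A = N - k"
  define B where "B = x - k"
  have AB: "A - B = N - x" "B \<le> A" "m \<le> A - B" "B \<le> A - m"
    using assms by (auto simp: A_def B_def)
  have 1: "(N choose x) * (x choose k) = (N choose k) * (A choose B)"
    unfolding A_def B_def using assms by (intro choose_mult) auto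
  have "(A choose B) * ((A - B) choose m) = (A choose (A - B)) * ((A - B) choose m)"
    by (subst binomial_symmetric[OF AB(2)]) (rule refl)
  also have "\<dots> = (A choose m) * ((A - m) choose (A - B - m))"
    using AB by (intro choose_mult) auto
  also have "(A - m) choose (A - B - m) = (A - m) choose B"
  proof -
    have "A - B - m = A - m - B" by simp
    then show ?thesis by (simp only: binomial_symmetric[OF AB(4)])
  qed
  finally have 2: "(A choose B) * ((A - B) choose m) = (A choose m) * ((A - m) choose B)" .
  have 3: "(N choose k) * (A choose m) = (N choose (k + m)) * ((k + m) choose k)"
    using choose_mult[of k "k + m" N] assms by (simp add: A_def)
  have "(N choose x) * (x choose k) * ((N - x) choose m) = (N choose k) * ((A choose B) * ((A - B) choose m))"
    unfolding 1 AB(1) by simp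
  also have "\<dots> = (N choose (k + m)) * ((k + m) choose k) * ((N - k - m) choose (x - k))"
    unfolding 2 mult.assoc[symmetric] 3 by (simp add: A_def B_def)
  finally show ?thesis .
qed

lemma binomial_pochhammer_product:
  assumes "x \<le> N"
  shows "real (N choose x) * pochhammer (- real x) k * pochhammer (real x - real N) m
     = pochhammer (- real N) (k + m) *
       (if k \<le> x \<and> x + m \<le> N then real ((N - k - m) choose (x - k)) else 0)"
proof -
  have e: "real x - real N = - real (N - x)" using assms by simp
  show ?thesis
  proof (cases "k \<le> x \<and> x + m \<le> N")
    case True
    have f: "fact k * fact m * real ((k + m) choose k) = (fact (k + m) :: real)"
    proof -
      have "fact k * fact (k + m - k) * ((k + m) choose k) = (fact (k + m) :: nat)"
        by (rule binomial_fact_lemma) simp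
      then show ?thesis by (metis add_diff_cancel_left' of_nat_fact of_nat_mult)
    qed
    have "real (N choose x) * pochhammer (- real x) k * pochhammer (real x - real N) m
        = (-1) ^ (k + m) * (fact k * fact m) * real ((N choose x) * (x choose k) * ((N - x) choose m))"
      unfolding e pochhammer_minus_of_nat by (simp add: power_add algebra_simps)
    also have "\<dots> = (-1) ^ (k + m) * (fact k * fact m * real ((k + m) choose k))
                    * real (N choose (k + m)) * real ((N - k - m) choose (x - k))"
      unfolding choose_mult_three[OF conjunct1[OF True] conjunct2[OF True]] by (simp add: algebra_simps)
    also have "\<dots> = pochhammer (- real N) (k + m) * real ((N - k - m) choose (x - k))"
      unfolding f pochhammer_minus_of_nat by (simp add: algebra_simps)
    finally show ?thesis using True by simp
  next
    case False
    then have "(x choose k) = 0 \<or> ((N - x) choose m) = 0" using assms by auto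
    then show ?thesis using False unfolding e pochhammer_minus_of_nat by auto
  qed
qed

lemma binomial_window_sum:
  assumes "k + m \<le> N"
  shows "(\<Sum>x\<le>N. if k \<le> x \<and> x + m \<le> N
            then real ((N - k - m) choose (x - k)) * p ^ x * (1 - p) ^ (N - x) else 0)
       = p ^ k * (1 - p) ^ m"
proof -
  define L where "L = N - k - m"
  define f where "f x = real (L choose (x - k)) * p ^ x * (1 - p) ^ (N - x)" for x
  have window: "{..N} \<inter> {x. k \<le> x \<and> x + m \<le> N} = {0 + k..L + k}"
    using assms by (auto simp: L_def)
  have "(\<Sum>x\<le>N. if k \<le> x \<and> x + m \<le> N then f x else 0) = (\<Sum>x\<in>{0 + k..L + k}. f x)"
    unfolding window[symmetric] by (simp add: sum.inter_restrict)
  also have "\<dots> = (\<Sum>y\<le>L. p ^ k * (1 - p) ^ m * (real (L choose y) * p ^ y * (1 - p) ^ (L - y)))"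
  proof (subst sum.shift_bounds_cl_nat_ivl, rule sum.cong)
    fix y assume "y \<in> {..L}"
    then have "N - (y + k) = (L - y) + m" using assms by (auto simp: L_def)
    then show "f (y + k) = p ^ k * (1 - p) ^ m * (real (L choose y) * p ^ y * (1 - p) ^ (L - y))"
      by (simp add: f_def power_add algebra_simps)
  qed auto
  also have "\<dots> = p ^ k * (1 - p) ^ m * (p + (1 - p)) ^ L"
    by (subst binomial_ring) (simp add: sum_distrib_left)
  finally show ?thesis
    unfolding f_def L_def by simp
qed

lemma binomial_moment:
  "(\<Sum>x\<le>N. pochhammer (- real x) k * pochhammer (real x - real N) m * binw N p x)
     = pochhammer (- real N) (k + m) * p ^ k * (1 - p) ^ m"
proof -
  have "(\<Sum>x\<le>N. pochhammer (- real x) k * pochhammer (real x - real N) m * binw N p x)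
      = pochhammer (- real N) (k + m) * (\<Sum>x\<le>N. if k \<le> x \<and> x + m \<le> N
            then real ((N - k - m) choose (x - k)) * p ^ x * (1 - p) ^ (N - x) else 0)"
    unfolding sum_distrib_left
  proof (rule sum.cong)
    fix x assume "x \<in> {..N}"
    then have "pochhammer (- real x) k * pochhammer (real x - real N) m * binw N p x
        = (real (N choose x) * pochhammer (- real x) k * pochhammer (real x - real N) m)
          * (p ^ x * (1 - p) ^ (N - x))"
      by (simp add: binw_def algebra_simps)
    also have "\<dots> = pochhammer (- real N) (k + m) * (if k \<le> x \<and> x + m \<le> N
            then real ((N - k - m) choose (x - k)) else 0) * (p ^ x * (1 - p) ^ (N - x))"
      using \<open>x \<in> {..N}\<close> by (simp only: binomial_pochhammer_product atMost_iff)
    finally show "pochhammer (- real x) k * pochhammer (real x - real N) m * binw N p x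
        = pochhammer (- real N) (k + m) * (if k \<le> x \<and> x + m \<le> N
            then real ((N - k - m) choose (x - k)) * p ^ x * (1 - p) ^ (N - x) else 0)"
      by (simp add: algebra_simps)
  qed simp
  moreover have "pochhammer (- real N) (k + m) = 0" if "N < k + m"
    using that by (intro pochhammer_of_nat_eq_0_lemma)
  ultimately show ?thesis
    using binomial_window_sum[of k m N p] by (cases "k + m \<le> N") auto
qed

section \<open>Kravchuk polynomials\<close>

definition kraw_poly :: "nat \<Rightarrow> real \<Rightarrow> nat \<Rightarrow> real poly" where
  "kraw_poly N p n = smult (p ^ n * pochhammer (- real N) n)
     (\<Sum>k\<le>n. smult (pochhammer (- real n) k / (pochhammer (- real N) k * fact k) * (1 / p) ^ k)
              (pochhammer [:0, -1:] k))"

lemma poly_kraw_poly: "poly (kraw_poly N p n) = kraw N p n"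
  by (rule ext) (simp add: kraw_poly_def kraw_def poly_sum poly_pochhammer sum_distrib_left field_simps)

lemma deg_below_kraw_poly: "deg_below (kraw_poly N p n) (Suc n)"
  unfolding kraw_poly_def
  by (intro deg_below_smult deg_below_sum) (auto intro: deg_below_mono deg_below_pochhammer_linear)

lemma coeff_kraw_poly_top:
  assumes "n \<le> N" "p \<noteq> 0"
  shows "coeff (kraw_poly N p n) n = 1"
proof -
  have pN: "pochhammer (- real N) n \<noteq> 0"
    using assms(1) by (auto simp: pochhammer_eq_0_iff)
  have c: "coeff (pochhammer [:0::real, -1:] k) n = (if k = n then (-1) ^ n else 0)" if "k \<le> n" for k
  proof (cases "k = n")
    case True
    then show ?thesis by (simp add: coeff_pochhammer_linear_top)
  next
    case False
    then show ?thesis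
      using that deg_below_pochhammer_linear[of 0 "-1" k] by (simp add: deg_below_def)
  qed
  have "coeff (kraw_poly N p n) n = p ^ n * pochhammer (- real N) n *
      (\<Sum>k\<le>n. pochhammer (- real n) k / (pochhammer (- real N) k * fact k) * (1 / p) ^ k
              * (if k = n then (-1) ^ n else 0))"
    unfolding kraw_poly_def coeff_smult coeff_sum by (simp add: c)
  also have "\<dots> = p ^ n * pochhammer (- real N) n *
      (pochhammer (- real n) n / (pochhammer (- real N) n * fact n) * (1 / p) ^ n * (-1) ^ n)"
    by (simp add: if_distrib sum.delta cong: if_cong)
  also have "\<dots> = 1"
    using pN assms(2) by (simp add: pochhammer_same field_simps power_mult_distrib[symmetric])
  finally show ?thesis .
qed

lemma coeff_kraw_poly_above: "k < i \<Longrightarrow> coeff (kraw_poly N p k) i = 0"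
  using deg_below_kraw_poly[of N p k] by (simp add: deg_below_def)

text \<open>Expanding \<open>K\<^sub>n\<close> in the basis \<open>(-x)\<^sub>k\<close>, each binomial moment against \<open>(x - N)\<^sub>m\<close> contributes
  \<open>(-N)\<^sub>k (-N + k)\<^sub>m p\<^sup>k (1 - p)\<^sup>m\<close>, leaving an \<open>n\<close>-th finite difference of a polynomial of degree \<open>m < n\<close>.\<close>
lemma kraw_orthogonal_pochhammer:
  assumes "m < n" "n \<le> N" "p \<noteq> 0"
  shows "bin_inner N p (kraw N p n) (\<lambda>x. pochhammer (x - real N) m) = 0"
proof -
  define c where "c = p ^ n * pochhammer (- real N) n"
  define e where "e k = pochhammer (- real n) k / (pochhammer (- real N) k * fact k) * (1 / p) ^ k" for k
  have "kraw N p n = (\<lambda>x. \<Sum>k\<le>n. (c * e k) * pochhammer (- x) k)"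
    by (rule ext) (simp add: kraw_def c_def e_def sum_distrib_left divide_inverse algebra_simps)
  then have "bin_inner N p (kraw N p n) (\<lambda>x. pochhammer (x - real N) m)
      = (\<Sum>k\<le>n. (c * e k) * bin_inner N p (\<lambda>x. pochhammer (- x) k) (\<lambda>x. pochhammer (x - real N) m))"
    by (simp add: bin_inner_sum_left)
  also have "\<dots> = (\<Sum>k\<le>n. c * (1 - p) ^ m * ((-1) ^ k * real (n choose k) * pochhammer (- real N + real k) m))"
  proof (rule sum.cong[OF refl])
    fix k assume "k \<in> {..n}"
    then have "pochhammer (- real N) k \<noteq> 0"
      using assms(2) by (auto simp: pochhammer_eq_0_iff)
    then have E: "e k * (pochhammer (- real N) k * p ^ k) = (-1) ^ k * real (n choose k)"
      unfolding e_def pochhammer_minus_of_nat using assms(3) by (simp add: field_simps power_one_over)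
    have "bin_inner N p (\<lambda>x. pochhammer (- x) k) (\<lambda>x. pochhammer (x - real N) m)
        = pochhammer (- real N) k * pochhammer (- real N + real k) m * p ^ k * (1 - p) ^ m"
      unfolding bin_inner_def binomial_moment by (simp add: pochhammer_product')
    then have "c * e k * bin_inner N p (\<lambda>x. pochhammer (- x) k) (\<lambda>x. pochhammer (x - real N) m)
        = c * (1 - p) ^ m * (e k * (pochhammer (- real N) k * p ^ k) * pochhammer (- real N + real k) m)"
      by (simp add: algebra_simps)
    then show "c * e k * bin_inner N p (\<lambda>x. pochhammer (- x) k) (\<lambda>x. pochhammer (x - real N) m)
        = c * (1 - p) ^ m * ((-1) ^ k * real (n choose k) * pochhammer (- real N + real k) m)"
      unfolding E .
  qed
  also have "\<dots> = c * (1 - p) ^ m * (\<Sum>k\<le>n. (-1) ^ k * real (n choose k) * pochhammer (- real N + real k) m)"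
    by (simp only: sum_distrib_left)
  also have "\<dots> = 0"
    by (simp only: alternating_binomial_sum_pochhammer[OF assms(1)] mult_zero_right)
  finally show ?thesis .
qed

lemma kraw_orthogonal_deg_below:
  assumes "deg_below s n" "n \<le> N" "p \<noteq> 0"
  shows "bin_inner N p (kraw N p n) (poly s) = 0"
proof -
  obtain a where a: "s = (\<Sum>m<n. smult (a m) (pochhammer [:- real N, 1:] m))"
    using deg_below_triangular_span[OF _ assms(1)]
      deg_below_pochhammer_linear coeff_pochhammer_linear_top by fastforce
  have "poly (pochhammer [:- real N, 1:] m) = (\<lambda>x. pochhammer (x - real N) m)" for m
    by (simp add: poly_pochhammer fun_eq_iff)
  then show ?thesis
    unfolding a bin_inner_poly_sum_right using kraw_orthogonal_pochhammer assms(2,3) by simp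
qed

lemma kraw_orthogonal:
  assumes "k \<noteq> l" "k \<le> N" "l \<le> N" "p \<noteq> 0"
  shows "bin_inner N p (kraw N p l) (kraw N p k) = 0"
proof (cases "k < l")
  case True
  then have "deg_below (kraw_poly N p k) l"
    by (intro deg_below_mono[OF deg_below_kraw_poly]) simp
  then show ?thesis
    using kraw_orthogonal_deg_below[of "kraw_poly N p k" l N p] assms by (simp add: poly_kraw_poly)
next
  case False
  then have "deg_below (kraw_poly N p l) k"
    using assms(1) by (intro deg_below_mono[OF deg_below_kraw_poly]) simp
  then show ?thesis
    using kraw_orthogonal_deg_below[of "kraw_poly N p l" k N p] assms
    by (simp add: poly_kraw_poly bin_inner_commute)
qed

lemma krawnorm_eq_bin_inner: "krawnorm N p k = bin_inner N p (kraw N p k) (kraw N p k)"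
  unfolding krawnorm_def bin_inner_def by (simp add: power2_eq_square)

lemma krawnorm_pos:
  assumes "0 < p" "p < 1" "k \<le> N"
  shows "0 < krawnorm N p k"
proof -
  have "kraw_poly N p k \<noteq> 0"
    using coeff_kraw_poly_top[OF assms(3), of p] assms(1) by auto
  moreover have "deg_below (kraw_poly N p k) (Suc N)"
    using assms(3) by (intro deg_below_mono[OF deg_below_kraw_poly]) simp
  ultimately have "krawnorm N p k \<noteq> 0"
    using bin_inner_poly_self_eq_0[OF assms(1,2)] by (auto simp: krawnorm_eq_bin_inner poly_kraw_poly)
  then show ?thesis
    using bin_inner_self_nonneg[OF assms(1,2)] by (simp add: krawnorm_eq_bin_inner order_less_le)
qed

lemma kraw_expansion:
  assumes "deg_below s n" "n \<le> N" "0 < p" "p < 1"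
  shows "s = (\<Sum>k<n. smult (bin_inner N p (poly s) (kraw N p k) / krawnorm N p k) (kraw_poly N p k))"
proof -
  obtain a where a: "s = (\<Sum>m<n. smult (a m) (kraw_poly N p m))"
    using deg_below_triangular_span[OF _ assms(1)] deg_below_kraw_poly coeff_kraw_poly_top assms
    by fastforce
  have "a k = bin_inner N p (poly s) (kraw N p k) / krawnorm N p k" if k: "k < n" for k
  proof -
    have "bin_inner N p (poly s) (kraw N p k) = (\<Sum>m<n. a m * bin_inner N p (kraw N p m) (kraw N p k))"
      unfolding a bin_inner_poly_sum_left poly_kraw_poly ..
    also have "\<dots> = a k * krawnorm N p k"
      using k assms(2,3) kraw_orthogonal[of k _ N p]
      by (subst sum.remove[of _ k]) (auto simp: krawnorm_eq_bin_inner intro!: sum.neutral)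
    finally show ?thesis
      using krawnorm_pos[OF assms(3,4), of k N] k assms(2) by simp
  qed
  then show ?thesis by (subst a) (rule sum.cong, auto)
qed

section \<open>Reproducing kernels and the Christoffel--Darboux formula\<close>

lemma deg_below_linear_mult_diff:
  assumes "deg_below a (Suc m)" "deg_below b (Suc (Suc m))" "coeff b (Suc m) = coeff a m"
  shows "deg_below ([:c, 1:] * a - b) (Suc m)"
  unfolding deg_below_def
proof (intro allI impI)
  fix i assume "Suc m \<le> i"
  then obtain i' where i': "i = Suc i'" "m \<le> i'" by (cases i) auto
  then consider "i' = m" | "Suc m \<le> i'" by linarith
  then show "coeff ([:c, 1:] * a - b) i = 0"
    by cases (use assms i' in \<open>simp_all add: deg_below_def\<close>)
qed

definition kernel_poly :: "nat \<Rightarrow> real \<Rightarrow> nat \<Rightarrow> nat \<Rightarrow> real \<Rightarrow> real poly" where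
  "kernel_poly N p n j y =
     (\<Sum>k<n. smult (fdiff j (kraw N p k) y / krawnorm N p k) (kraw_poly N p k))"

lemma poly_kernel_poly: "poly (kernel_poly N p n j y) x = kernel N p n 0 j x y"
  by (simp add: kernel_poly_def kernel_def poly_sum poly_kraw_poly mult.commute)

lemma fdiff_poly_kernel_poly: "fdiff i (poly (kernel_poly N p n j y)) z = kernel N p n i j z y"
proof -
  have "poly (kernel_poly N p n j y) = (\<lambda>x. \<Sum>k<n. (fdiff j (kraw N p k) y / krawnorm N p k) * kraw N p k x)"
    by (rule ext) (simp add: kernel_poly_def poly_sum poly_kraw_poly)
  then show ?thesis
    by (simp only: fdiff_sum fdiff_cmult) (simp add: kernel_def mult.commute)
qed

lemma deg_below_kernel_poly: "deg_below (kernel_poly N p n j y) n"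
  unfolding kernel_poly_def
  by (intro deg_below_sum deg_below_smult) (auto intro: deg_below_mono[OF deg_below_kraw_poly])

lemma coeff_kernel_poly_top:
  assumes "1 \<le> n" "n \<le> N" "p \<noteq> 0"
  shows "coeff (kernel_poly N p n j y) (n - 1) = fdiff j (kraw N p (n - 1)) y / krawnorm N p (n - 1)"
proof -
  have "{..<n} = insert (n - 1) {..<n - 1}" using assms(1) by auto
  then show ?thesis
    unfolding kernel_poly_def coeff_sum coeff_smult
    using coeff_kraw_poly_top[of "n - 1" N p] coeff_kraw_poly_above[of _ "n - 1" N p] assms
    by simp
qed

lemma kernel_reproducing:
  assumes "deg_below r n" "n \<le> N" "0 < p" "p < 1"
  shows "bin_inner N p (poly (kernel_poly N p n j y)) (poly r) = fdiff j (poly r) y"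
proof -
  define c where "c k = bin_inner N p (poly r) (kraw N p k) / krawnorm N p k" for k
  have "poly r = (\<lambda>x. \<Sum>k<n. c k * kraw N p k x)"
    by (subst kraw_expansion[OF assms]) (simp add: c_def poly_sum poly_kraw_poly fun_eq_iff)
  then have "fdiff j (poly r) y = (\<Sum>k<n. c k * fdiff j (kraw N p k) y)"
    by (simp add: fdiff_sum fdiff_cmult)
  also have "\<dots> = bin_inner N p (poly (kernel_poly N p n j y)) (poly r)"
    unfolding kernel_poly_def bin_inner_poly_sum_left poly_kraw_poly
    by (simp add: c_def bin_inner_commute mult.commute)
  finally show ?thesis ..
qed

text \<open>Multiplication by \<open>x - y\<close> is self-adjoint, and \<open>(x - y) K\<^sub>k\<close> differs from a polynomial of
  degree \<open>< n\<close> vanishing at \<open>y\<close> by a multiple of \<open>K\<^sub>n\<close>; the reproducing property does the rest.\<close>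
lemma bin_inner_linear_mult_kernel_poly:
  assumes "k < n" "n \<le> N" "0 < p" "p < 1"
  shows "bin_inner N p (poly ([:- y, 1:] * kernel_poly N p n 0 y)) (kraw N p k)
       = - (if k = n - 1 then kraw N p n y else 0)"
proof -
  have p0: "p \<noteq> 0" using assms(3) by simp
  define KP where "KP = kernel_poly N p n 0 y"
  define s where "s = [:- y, 1:] * kraw_poly N p k - (if k = n - 1 then kraw_poly N p n else 0)"
  have "deg_below s n"
  proof (cases "k = n - 1")
    case True
    then have n: "n = Suc k" using assms(1) by simp
    have "deg_below ([:- y, 1:] * kraw_poly N p k - kraw_poly N p (Suc k)) (Suc k)"
      using coeff_kraw_poly_top[of "Suc k" N p] coeff_kraw_poly_top[of k N p] assms(2) p0 n
      by (intro deg_below_linear_mult_diff) (simp_all add: deg_below_kraw_poly)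
    then show ?thesis
      by (simp add: s_def n)
  next
    case False
    have "deg_below ([:- y, 1:] * kraw_poly N p k) n"
      using False assms(1) by (intro deg_below_mono[OF deg_below_linear_mult[OF deg_below_kraw_poly]]) simp
    then show ?thesis unfolding s_def if_not_P[OF False] by simp
  qed
  then have "bin_inner N p (poly KP) (poly s) = poly s y"
    using kernel_reproducing[OF _ assms(2-4), of s 0 y] by (simp add: KP_def)
  also have "\<dots> = - (if k = n - 1 then kraw N p n y else 0)"
    by (simp add: s_def poly_kraw_poly)
  finally have "bin_inner N p (poly KP) (poly s) = - (if k = n - 1 then kraw N p n y else 0)" .
  moreover have "bin_inner N p (poly KP) (kraw N p n) = 0"
    unfolding KP_def
    by (subst bin_inner_commute) (rule kraw_orthogonal_deg_below[OF deg_below_kernel_poly assms(2) p0])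
  moreover have "[:- y, 1:] * kraw_poly N p k = s + (if k = n - 1 then kraw_poly N p n else 0)"
    by (simp add: s_def)
  then have "bin_inner N p (poly KP) (poly ([:- y, 1:] * kraw_poly N p k))
      = bin_inner N p (poly KP) (poly s) + (if k = n - 1 then bin_inner N p (poly KP) (kraw N p n) else 0)"
    by (simp only: bin_inner_poly_add_right) (simp add: poly_kraw_poly bin_inner_def)
  ultimately show ?thesis
    unfolding KP_def[symmetric] poly_kraw_poly[symmetric] bin_inner_poly_linear_mult by simp
qed

text \<open>Christoffel--Darboux formula: the polynomial \<open>F\<close> below has degree \<open>< n\<close> (its top coefficients
  cancel) and is orthogonal to \<open>K\<^sub>0, \<dots>, K\<^sub>n\<^sub>-\<^sub>1\<close>, hence vanishes.\<close>
lemma christoffel_darboux: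
  assumes "1 \<le> n" "n \<le> N" "0 < p" "p < 1"
  shows "(x - y) * kernel N p n 0 0 x y =
    (kraw N p n x * kraw N p (n - 1) y - kraw N p (n - 1) x * kraw N p n y) / krawnorm N p (n - 1)"
proof -
  have p0: "p \<noteq> 0" using assms(3) by simp
  define m where "m = n - 1"
  have n: "n = Suc m" using assms(1) by (simp add: m_def)
  define c1 where "c1 = kraw N p m y / krawnorm N p m"
  define c2 where "c2 = kraw N p n y / krawnorm N p m"
  define F where "F = ([:- y, 1:] * kernel_poly N p n 0 y - smult c1 (kraw_poly N p n))
                      + smult c2 (kraw_poly N p m)"
  have "deg_below ([:- y, 1:] * kernel_poly N p n 0 y - smult c1 (kraw_poly N p n)) n"
    unfolding n using deg_below_kernel_poly[of N p n 0 y] coeff_kernel_poly_top[OF assms(1,2) p0]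
      coeff_kraw_poly_top[OF assms(2) p0]
    by (intro deg_below_linear_mult_diff deg_below_smult deg_below_kraw_poly) (simp_all add: c1_def n)
  then have degF: "deg_below F n"
    unfolding F_def n by (simp add: deg_below_def deg_below_kraw_poly[of N p m, unfolded deg_below_def])
  have "bin_inner N p (poly F) (kraw N p k) = 0" if "k < n" for k
  proof -
    have "bin_inner N p (kraw N p n) (kraw N p k) = 0"
      using kraw_orthogonal[of k n N p] that assms(2) p0 by simp
    moreover have "bin_inner N p (kraw N p m) (kraw N p k) = (if k = m then krawnorm N p m else 0)"
      using kraw_orthogonal[of k m N p] that assms(2) p0 by (simp add: n krawnorm_eq_bin_inner)
    ultimately have "bin_inner N p (poly F) (kraw N p k)
        = - (if k = m then kraw N p n y else 0) + c2 * (if k = m then krawnorm N p m else 0)"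
      unfolding F_def bin_inner_poly_add_left bin_inner_poly_diff_left bin_inner_poly_smult_left
        poly_kraw_poly bin_inner_linear_mult_kernel_poly[OF that assms(2-4)] by (simp add: m_def)
    then show ?thesis
      using krawnorm_pos[OF assms(3,4), of m N] assms(2) by (simp add: c2_def n)
  qed
  then have "F = 0"
    by (subst kraw_expansion[OF degF assms(2-4)]) simp
  then have "poly F x = 0" by simp
  then have "(x - y) * kernel N p n 0 0 x y = c1 * kraw N p n x - c2 * kraw N p m x"
    unfolding F_def by (simp add: poly_kernel_poly poly_kraw_poly algebra_simps)
  then show ?thesis
    unfolding c1_def c2_def m_def by (simp add: diff_divide_distrib mult.commute)
qed

lemma kernel_0j_eq_fdiff: "kernel N p n 0 j x y = fdiff j (kernel N p n 0 0 x) y"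
proof -
  have "kernel N p n 0 0 x = (\<lambda>t. \<Sum>k<n. (kraw N p k x / krawnorm N p k) * kraw N p k t)"
    by (simp add: kernel_def fun_eq_iff)
  then show ?thesis
    by (simp only: fdiff_sum fdiff_cmult) (simp add: kernel_def)
qed

lemma kernel_0j_eq_calA_calB:
  assumes "1 \<le> n" "n \<le> N" "0 < p" "p < 1" "falling (x - y) (j + 1) \<noteq> 0"
  shows "kernel N p n 0 j x y = calA N p j n x y * kraw N p n x + calB N p j n x y * kraw N p (n - 1) x"
proof -
  define nr where "nr = krawnorm N p (n - 1)"
  define cA where "cA = kraw N p n x / nr"
  define cB where "cB = kraw N p (n - 1) x / nr"
  define G where "G t = cA * kraw N p (n - 1) t - cB * kraw N p n t" for t
  have nr: "0 < nr"
    using krawnorm_pos[OF assms(3,4), of "n - 1" N] assms(2) by (simp add: nr_def)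
  have "kernel N p n 0 j x y = fdiff j (kernel N p n 0 0 x) y"
    by (rule kernel_0j_eq_fdiff)
  also have "\<dots> = fdiff j (\<lambda>t. G t / (x - t)) y"
  proof (rule fdiff_cong)
    fix i assume "i \<le> j"
    then have "x - (y + real i) \<noteq> 0"
      using falling_factor_nonzero[OF assms(5)] by (simp add: algebra_simps)
    moreover have "(x - (y + real i)) * kernel N p n 0 0 x (y + real i) = G (y + real i)"
      unfolding christoffel_darboux[OF assms(1-4)] G_def cA_def cB_def nr_def
      by (simp add: diff_divide_distrib mult.commute)
    ultimately show "kernel N p n 0 0 x (y + real i) = G (y + real i) / (x - (y + real i))"
      by (simp add: field_simps)
  qed
  also have "\<dots> = fact j / falling (x - y) (j + 1) * (\<Sum>k\<le>j. fdiff k G y / fact k * falling (x - y) k)"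
    by (rule fdiff_divide_linear[OF assms(5)])
  also have "(\<Sum>k\<le>j. fdiff k G y / fact k * falling (x - y) k)
      = cA * (\<Sum>k\<le>j. fdiff k (kraw N p (n - 1)) y / fact k * falling (x - y) k)
        - cB * (\<Sum>k\<le>j. fdiff k (kraw N p n) y / fact k * falling (x - y) k)"
    unfolding G_def fdiff_diff fdiff_cmult
    by (simp add: sum_distrib_left sum_subtractf[symmetric] diff_divide_distrib left_diff_distrib mult.assoc)
  finally have "kernel N p n 0 j x y = fact j / falling (x - y) (j + 1) *
      (cA * (\<Sum>k\<le>j. fdiff k (kraw N p (n - 1)) y / fact k * falling (x - y) k)
        - cB * (\<Sum>k\<le>j. fdiff k (kraw N p n) y / fact k * falling (x - y) k))" .
  then show ?thesis
    unfolding calA_def calB_def nr_def[symmetric] cA_def cB_def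
    using nr assms(5) by (simp add: field_simps)
qed

section \<open>Kravchuk--Sobolev polynomials\<close>

lemma sobIP_eq_bin_inner:
  "sobIP N p lam mu j f g = bin_inner N p (poly f) (poly g)
     + lam * fdiff j (poly f) 0 * fdiff j (poly g) 0 + mu * fdiff j (poly f) (real N) * fdiff j (poly g) (real N)"
  unfolding sobIP_def bin_inner_def ..

lemma sobIP_diff_left:
  "sobIP N p lam mu j (f - g) r = sobIP N p lam mu j f r - sobIP N p lam mu j g r"
proof -
  have "poly (f - g) = (\<lambda>x. poly f x - poly g x)" by (rule ext) simp
  then show ?thesis
    unfolding sobIP_eq_bin_inner bin_inner_poly_diff_left by (simp add: fdiff_diff algebra_simps)
qed

text \<open>Uniqueness in the definite description of \<open>KS\<close> holds because \<open>sobIP\<close> is positive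
  definite on polynomials of degree \<open>\<le> N\<close>.\<close>
lemma KS_eqI:
  assumes "n \<le> N" "0 < p" "p < 1" "0 \<le> lam" "0 \<le> mu"
    and q: "degree q = n" "lead_coeff q = 1" "\<And>r. degree r < n \<Longrightarrow> sobIP N p lam mu j q r = 0"
  shows "KS N p lam mu j n = q"
  unfolding KS_def
proof (rule the_equality)
  fix q' assume q': "degree q' = n \<and> lead_coeff q' = 1 \<and> (\<forall>r. degree r < n \<longrightarrow> sobIP N p lam mu j q' r = 0)"
  define d where "d = q' - q"
  have "deg_below d n"
    unfolding deg_below_def d_def using q q' by (auto simp: le_less coeff_eq_0)
  then have "d = 0 \<or> degree d < n"
    by (cases n) (auto dest: deg_below_zero_eq degree_less_if_deg_below)
  moreover have "d = 0" if "degree d < n"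
  proof (rule bin_inner_poly_self_eq_0[OF assms(2,3)])
    show "deg_below d (Suc N)"
      using \<open>deg_below d n\<close> assms(1) by (simp add: deg_below_mono)
    have "sobIP N p lam mu j d d = 0"
      using q'[THEN conjunct2, THEN conjunct2] q(3) that by (simp add: d_def sobIP_diff_left)
    then have "bin_inner N p (poly d) (poly d) + lam * (fdiff j (poly d) 0)\<^sup>2
        + mu * (fdiff j (poly d) (real N))\<^sup>2 = 0"
      unfolding sobIP_eq_bin_inner by (simp add: power2_eq_square mult.assoc)
    then show "bin_inner N p (poly d) (poly d) = 0"
      using bin_inner_self_nonneg[OF assms(2,3), of N "poly d"] assms(4,5)
      by (smt (verit) mult_nonneg_nonneg zero_le_power2)
  qed
  ultimately show "q' = q" by (auto simp: d_def)
qed (use q in blast)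

lemma weighted_cauchy_schwarz:
  fixes u v w :: "nat \<Rightarrow> real"
  assumes w: "\<And>k. k \<in> A \<Longrightarrow> 0 < w k"
  shows "(\<Sum>k\<in>A. u k * v k / w k)\<^sup>2 \<le> (\<Sum>k\<in>A. u k * u k / w k) * (\<Sum>k\<in>A. v k * v k / w k)"
proof -
  define a where "a = (\<Sum>k\<in>A. u k * u k / w k)"
  define b where "b = (\<Sum>k\<in>A. u k * v k / w k)"
  define c where "c = (\<Sum>k\<in>A. v k * v k / w k)"
  have quadratic: "0 \<le> a - 2 * t * b + t * t * c" for t
  proof -
    have "0 \<le> (\<Sum>k\<in>A. (u k - t * v k) * (u k - t * v k) / w k)"
      using w by (intro sum_nonneg) (simp add: less_imp_le)
    also have "\<dots> = a - 2 * t * b + t * t * c"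
      unfolding a_def b_def c_def
      by (simp add: sum.distrib sum_subtractf sum_distrib_left algebra_simps diff_divide_distrib
          add_divide_distrib flip: sum_divide_distrib)
    finally show ?thesis .
  qed
  have "0 \<le> c"
    unfolding c_def using w by (intro sum_nonneg) (simp add: less_imp_le)
  then consider "c = 0" | "0 < c" by linarith
  then have "b\<^sup>2 \<le> a * c"
  proof cases
    case 1
    have "b = 0"
    proof (rule ccontr)
      assume "b \<noteq> 0"
      then have "a - 2 * ((a + 1) / (2 * b)) * b = -1" by (simp add: field_simps)
      then show False using quadratic[of "(a + 1) / (2 * b)"] 1 by simp
    qed
    then show ?thesis using 1 by simp
  next
    case 2
    have "0 \<le> a - 2 * (b / c) * b + (b / c) * (b / c) * c" by (rule quadratic)
    then show ?thesis using 2 by (simp add: field_simps power2_eq_square)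
  qed
  then show ?thesis by (simp add: a_def b_def c_def)
qed

lemma deltaS_pos:
  assumes "n \<le> N" "0 < p" "p < 1" "0 \<le> lam" "0 \<le> mu"
  shows "0 < deltaS N p lam mu j n"
proof -
  define u where "u k = fdiff j (kraw N p k) 0" for k
  define v where "v k = fdiff j (kraw N p k) (real N)" for k
  define w where "w k = krawnorm N p k" for k
  have w: "\<And>k. k \<in> {..<n} \<Longrightarrow> 0 < w k"
    unfolding w_def using krawnorm_pos[OF assms(2,3)] assms(1) by simp
  define a where "a = kernel N p n j j 0 0"
  define b where "b = kernel N p n j j 0 (real N)"
  define d where "d = kernel N p n j j (real N) (real N)"
  have a: "a = (\<Sum>k<n. u k * u k / w k)" unfolding a_def kernel_def u_def w_def ..
  have b: "b = (\<Sum>k<n. u k * v k / w k)" unfolding b_def kernel_def u_def v_def w_def ..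
  have d: "d = (\<Sum>k<n. v k * v k / w k)" unfolding d_def kernel_def v_def w_def ..
  have "kernel N p n j j (real N) 0 = b" unfolding b_def kernel_def by (simp add: mult.commute)
  then have "deltaS N p lam mu j n = 1 + lam * a + mu * d + lam * mu * (a * d - b\<^sup>2)"
    unfolding deltaS_def a_def[symmetric] d_def[symmetric] b_def[symmetric]
    by (simp add: algebra_simps power2_eq_square)
  moreover have "0 \<le> a" "0 \<le> d"
    unfolding a d using w by (auto intro!: sum_nonneg simp: less_imp_le)
  moreover have "b\<^sup>2 \<le> a * d"
    unfolding a b d by (rule weighted_cauchy_schwarz[OF w])
  ultimately show ?thesis
    using assms(4,5) by (smt (verit) mult_nonneg_nonneg)
qed

text \<open>Cramer's rule for the \<open>2 \<times> 2\<close> system defining \<open>\<Phi>\<^sub>1, \<Phi>\<^sub>2\<close>.\<close>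
lemma linear_system_2x2_solution:
  fixes a b c d d0 dN lam mu D F1 F2 :: real
  assumes D: "D = (1 + lam * a) * (1 + mu * d) - lam * mu * b * c" "D \<noteq> 0"
    and F1: "F1 * D = d0 * (1 + mu * d) - mu * b * dN"
    and F2: "F2 * D = (1 + lam * a) * dN - lam * c * d0"
  shows "d0 - lam * F1 * a - mu * F2 * b = F1" "dN - lam * F1 * c - mu * F2 * d = F2"
proof -
  have "(d0 - lam * F1 * a - mu * F2 * b) * D = d0 * D - lam * a * (F1 * D) - mu * b * (F2 * D)"
    by (simp add: algebra_simps)
  also have "\<dots> = F1 * D" unfolding F1 F2 by (simp add: D(1) algebra_simps)
  finally show "d0 - lam * F1 * a - mu * F2 * b = F1" using D(2) by simp
  have "(dN - lam * F1 * c - mu * F2 * d) * D = dN * D - lam * c * (F1 * D) - mu * d * (F2 * D)"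
    by (simp add: algebra_simps)
  also have "\<dots> = F2 * D" unfolding F1 F2 by (simp add: D(1) algebra_simps)
  finally show "dN - lam * F1 * c - mu * F2 * d = F2" using D(2) by simp
qed

lemma Phi_solve_system:
  assumes "deltaS N p lam mu j n \<noteq> 0"
  shows "fdiff j (kraw N p n) 0 - lam * Phi1 N p lam mu j n * kernel N p n j j 0 0
           - mu * Phi2 N p lam mu j n * kernel N p n j j 0 (real N) = Phi1 N p lam mu j n"
    and "fdiff j (kraw N p n) (real N) - lam * Phi1 N p lam mu j n * kernel N p n j j (real N) 0
           - mu * Phi2 N p lam mu j n * kernel N p n j j (real N) (real N) = Phi2 N p lam mu j n"
proof -
  have "Phi1 N p lam mu j n * deltaS N p lam mu j n
      = fdiff j (kraw N p n) 0 * (1 + mu * kernel N p n j j (real N) (real N))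
        - mu * kernel N p n j j 0 (real N) * fdiff j (kraw N p n) (real N)"
    "Phi2 N p lam mu j n * deltaS N p lam mu j n
      = (1 + lam * kernel N p n j j 0 0) * fdiff j (kraw N p n) (real N)
        - lam * kernel N p n j j (real N) 0 * fdiff j (kraw N p n) 0"
    unfolding Phi1_def Phi2_def using assms by simp_all
  note solution = linear_system_2x2_solution[OF deltaS_def assms this]
  show "fdiff j (kraw N p n) 0 - lam * Phi1 N p lam mu j n * kernel N p n j j 0 0
           - mu * Phi2 N p lam mu j n * kernel N p n j j 0 (real N) = Phi1 N p lam mu j n"
    by (rule solution(1))
  show "fdiff j (kraw N p n) (real N) - lam * Phi1 N p lam mu j n * kernel N p n j j (real N) 0
           - mu * Phi2 N p lam mu j n * kernel N p n j j (real N) (real N) = Phi2 N p lam mu j n"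
    by (rule solution(2))
qed

lemma KS_connection:
  assumes "n \<le> N" "0 < p" "p < 1" "0 \<le> lam" "0 \<le> mu"
  shows "KS N p lam mu j n = kraw_poly N p n
           - smult (lam * Phi1 N p lam mu j n) (kernel_poly N p n j 0)
           - smult (mu * Phi2 N p lam mu j n) (kernel_poly N p n j (real N))"
    (is "_ = ?P")
proof (rule KS_eqI[OF assms])
  define F1 where "F1 = Phi1 N p lam mu j n"
  define F2 where "F2 = Phi2 N p lam mu j n"
  have "deltaS N p lam mu j n \<noteq> 0"
    using deltaS_pos[OF assms, of j] by simp
  note endpoints = Phi_solve_system[OF this, folded F1_def F2_def]
  have "poly ?P = (\<lambda>x. kraw N p n x - (lam * F1) * poly (kernel_poly N p n j 0) x
                      - (mu * F2) * poly (kernel_poly N p n j (real N)) x)"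
    by (simp add: F1_def F2_def poly_kraw_poly fun_eq_iff)
  then have fdiff_P: "fdiff j (poly ?P) z = fdiff j (kraw N p n) z - lam * F1 * kernel N p n j j z 0
              - mu * F2 * kernel N p n j j z (real N)" for z
    by (simp add: fdiff_diff fdiff_cmult fdiff_poly_kernel_poly)
  show "sobIP N p lam mu j ?P r = 0" if "degree r < n" for r
  proof -
    have r: "deg_below r n" using that by (rule deg_below_if_degree_less)
    have "bin_inner N p (poly ?P) (poly r) = - lam * F1 * fdiff j (poly r) 0 - mu * F2 * fdiff j (poly r) (real N)"
      unfolding bin_inner_poly_diff_left bin_inner_poly_smult_left poly_kraw_poly
        kernel_reproducing[OF r assms(1-3)] F1_def F2_def
      using kraw_orthogonal_deg_below[OF r assms(1)] assms(2) by simp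
    then show ?thesis
      unfolding sobIP_eq_bin_inner fdiff_P endpoints by simp
  qed
  have "coeff (kernel_poly N p n j y) n = 0" for y
    using deg_below_kernel_poly[of N p n j y] by (simp add: deg_below_def)
  then have lead: "coeff ?P n = 1"
    using coeff_kraw_poly_top[OF assms(1)] assms(2) by simp
  have "deg_below ?P (Suc n)"
    by (intro deg_below_diff deg_below_smult deg_below_kraw_poly deg_below_mono[OF deg_below_kernel_poly]) simp_all
  then show "degree ?P = n"
    using lead by (intro antisym le_degree) (auto dest: degree_less_if_deg_below)
  then show "lead_coeff ?P = 1"
    using lead by simp
qed

lemma poly_KS_eq_calC1_calD1:
  assumes "1 \<le> n" "n \<le> N" "0 < p" "p < 1" "0 \<le> lam" "0 \<le> mu"
    and "falling x (j + 1) \<noteq> 0" "falling (x - real N) (j + 1) \<noteq> 0"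
  shows "poly (KS N p lam mu j n) x
       = calC1 N p lam mu j n x * kraw N p n x + calD1 N p lam mu j n x * kraw N p (n - 1) x"
proof -
  have "kernel N p n 0 j x 0 = calA N p j n x 0 * kraw N p n x + calB N p j n x 0 * kraw N p (n - 1) x"
    using assms by (intro kernel_0j_eq_calA_calB) simp_all
  moreover have "kernel N p n 0 j x (real N)
      = calA N p j n x (real N) * kraw N p n x + calB N p j n x (real N) * kraw N p (n - 1) x"
    using assms by (intro kernel_0j_eq_calA_calB) simp_all
  ultimately show ?thesis
    unfolding KS_connection[OF assms(2-6)] calC1_def calD1_def
    by (simp add: poly_kraw_poly poly_kernel_poly algebra_simps)
qed

section \<open>The hypergeometric form\<close>

lemma pochhammer_shift_ratio:
  fixes f :: real
  assumes "f - 1 \<noteq> 0" "pochhammer (f - 1) k \<noteq> 0"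
  shows "pochhammer f k / pochhammer (f - 1) k = 1 + real k / (f - 1)"
proof -
  have "(f - 1) * pochhammer f k = pochhammer (f - 1) k * (f - 1 + real k)"
    using pochhammer_rec[of "f - 1" k] pochhammer_Suc[of "f - 1" k] by simp
  then show ?thesis using assms by (simp add: field_simps)
qed

text \<open>The contiguity relation that turns the \<open>\<^sub>3F\<^sub>2\<close> of the theorem into a combination of two
  Kravchuk series: \<open>(f)\<^sub>k / (f - 1)\<^sub>k = 1 + k / (f - 1)\<close> and \<open>k (-n)\<^sub>k = n ((-n)\<^sub>k - (-n + 1)\<^sub>k)\<close>.\<close>
lemma contiguous_sum:
  fixes T :: "nat \<Rightarrow> real" and f :: real
  assumes "1 \<le> n" "\<forall>i<n. f - 1 \<noteq> - real i"
  shows "(\<Sum>k\<le>n. pochhammer (- real n) k * pochhammer f k / pochhammer (f - 1) k * T k)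
       = (\<Sum>k\<le>n. pochhammer (- real n) k * T k)
         + real n / (f - 1) * (\<Sum>k\<le>n. (pochhammer (- real n) k - pochhammer (- real n + 1) k) * T k)"
proof -
  have f1: "f - 1 \<noteq> 0" using assms by auto
  have summand: "pochhammer (- real n) k * pochhammer f k / pochhammer (f - 1) k * T k
      = pochhammer (- real n) k * T k
        + real n / (f - 1) * ((pochhammer (- real n) k - pochhammer (- real n + 1) k) * T k)"
    if "k \<le> n" for k
  proof -
    have "pochhammer (f - 1) k \<noteq> 0"
      using assms(2) that by (auto simp: pochhammer_eq_0_iff)
    then have "pochhammer f k / pochhammer (f - 1) k = 1 + real k / (f - 1)"
      by (rule pochhammer_shift_ratio[OF f1])
    then have "pochhammer (- real n) k * pochhammer f k / pochhammer (f - 1) k * T k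
        = pochhammer (- real n) k * (1 + real k / (f - 1)) * T k"
      by (metis times_divide_eq_right)
    also have "\<dots> = pochhammer (- real n) k * T k + real k * pochhammer (- real n) k / (f - 1) * T k"
      by (simp add: algebra_simps)
    also have "real k * pochhammer (- real n) k = real n * (pochhammer (- real n) k - pochhammer (- real n + 1) k)"
      using pochhammer_absorb_comp[of "real n" k] by (simp add: algebra_simps)
    finally show ?thesis by simp
  qed
  have "(\<Sum>k\<le>n. pochhammer (- real n) k * pochhammer f k / pochhammer (f - 1) k * T k)
      = (\<Sum>k\<le>n. pochhammer (- real n) k * T k
          + real n / (f - 1) * ((pochhammer (- real n) k - pochhammer (- real n + 1) k) * T k))"
    by (intro sum.cong refl summand) simp
  then show ?thesis
    by (simp add: sum.distrib sum_distrib_left)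
qed

definition kraw_term :: "nat \<Rightarrow> real \<Rightarrow> real \<Rightarrow> nat \<Rightarrow> real" where
  "kraw_term N p x k = pochhammer (- x) k / (pochhammer (- real N) k * fact k) * (1 / p) ^ k"

lemma kraw_eq_kraw_term_sum:
  "kraw N p n x = p ^ n * pochhammer (- real N) n * (\<Sum>k\<le>n. pochhammer (- real n) k * kraw_term N p x k)"
  unfolding kraw_def kraw_term_def by (simp add: field_simps)

lemma kraw_pred_eq_kraw_term_sum:
  assumes "1 \<le> n"
  shows "kraw N p (n - 1) x
       = p ^ (n - 1) * pochhammer (- real N) (n - 1) * (\<Sum>k\<le>n. pochhammer (- real n + 1) k * kraw_term N p x k)"
proof -
  have "pochhammer (- real n + 1) n = 0"
    using pochhammer_of_nat_eq_0_lemma[of "n - 1" n, where 'a=real] assms by (simp add: of_nat_diff)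
  moreover have "{..n} = insert n {..n - 1}"
    using assms by auto
  ultimately have "(\<Sum>k\<le>n. pochhammer (- real n + 1) k * kraw_term N p x k)
      = (\<Sum>k\<le>n - 1. pochhammer (- real n + 1) k * kraw_term N p x k)"
    using assms by simp
  then show ?thesis
    using assms by (simp add: kraw_eq_kraw_term_sum of_nat_diff)
qed

lemma hypergeometric_series_eq_kraw_term_sums:
  assumes "1 \<le> n" "\<forall>i<n. f - 1 \<noteq> - real i"
  shows "(\<Sum>k\<le>n. pochhammer (- real n) k * pochhammer (- x) k * pochhammer f k
                / (pochhammer (- real N) k * pochhammer (f - 1) k) * (1 / p) ^ k / fact k)
       = (\<Sum>k\<le>n. pochhammer (- real n) k * kraw_term N p x k)
         + real n / (f - 1) * ((\<Sum>k\<le>n. pochhammer (- real n) k * kraw_term N p x k)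
                                - (\<Sum>k\<le>n. pochhammer (- real n + 1) k * kraw_term N p x k))"
proof -
  have "(\<Sum>k\<le>n. pochhammer (- real n) k * pochhammer (- x) k * pochhammer f k
                / (pochhammer (- real N) k * pochhammer (f - 1) k) * (1 / p) ^ k / fact k)
      = (\<Sum>k\<le>n. pochhammer (- real n) k * pochhammer f k / pochhammer (f - 1) k * kraw_term N p x k)"
    by (simp add: kraw_term_def field_simps)
  then show ?thesis
    using contiguous_sum[OF assms, of "kraw_term N p x"] by (simp add: left_diff_distrib sum_subtractf)
qed

lemma kraw_leading_factor:
  assumes "1 \<le> n" "n \<le> N"
  shows "p ^ n * pochhammer (- real N) n
       = - (p * real (N - n + 1)) * (p ^ (n - 1) * pochhammer (- real N) (n - 1))"
proof -
  have P: "pochhammer (- real N) n = pochhammer (- real N) (n - 1) * (- real (N - n + 1))"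
    using pochhammer_Suc[of "- real N" "n - 1"] assms by (simp add: of_nat_diff)
  have "p ^ n = p * p ^ (n - 1)"
    using assms power_Suc[of p "n - 1"] by simp
  then show ?thesis
    unfolding P by (simp add: algebra_simps)
qed

lemma kraw_combination_hypergeometric:
  fixes C D :: real
  assumes n: "1 \<le> n" "n \<le> N" and "D \<noteq> 0"
    and f: "\<forall>i<n. (real n * p * real (N - n + 1) * C / D - real n + 1) - 1 \<noteq> - real i"
  shows "C * kraw N p n x + D * kraw N p (n - 1) x =
    (let f = real n * p * real (N - n + 1) * C / D - real n + 1;
         h = - (p * real (N - n + 1) * C - D)
     in p ^ (n - 1) * pochhammer (- real N) (n - 1) * h *
       (\<Sum>k\<le>n. pochhammer (- real n) k * pochhammer (- x) k * pochhammer f k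
                / (pochhammer (- real N) k * pochhammer (f - 1) k) * (1 / p) ^ k / fact k))"
proof -
  define a where "a = p * real (N - n + 1)"
  define f where "f = real n * a * C / D - real n + 1"
  define c where "c = p ^ (n - 1) * pochhammer (- real N) (n - 1)"
  define S where "S = (\<Sum>k\<le>n. pochhammer (- real n) k * kraw_term N p x k)"
  define S' where "S' = (\<Sum>k\<le>n. pochhammer (- real n + 1) k * kraw_term N p x k)"
  have f1: "f - 1 = real n * (a * C - D) / D"
    using assms(3) by (simp add: f_def field_simps)
  have "\<forall>i<n. f - 1 \<noteq> - real i"
    using f by (simp add: f_def a_def mult.assoc)
  then have series: "(\<Sum>k\<le>n. pochhammer (- real n) k * pochhammer (- x) k * pochhammer f k
                / (pochhammer (- real N) k * pochhammer (f - 1) k) * (1 / p) ^ k / fact k)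
      = S + real n / (f - 1) * (S - S')"
    unfolding S_def S'_def by (rule hypergeometric_series_eq_kraw_term_sums[OF n(1)])
  have "f - 1 \<noteq> 0"
    using f n by (auto simp: f_def a_def mult.assoc)
  then have aCD: "a * C - D \<noteq> 0"
    unfolding f1 by simp
  have "C * kraw N p n x + D * kraw N p (n - 1) x = c * (D * S' - a * C * S)"
    unfolding kraw_eq_kraw_term_sum[of N p n] kraw_pred_eq_kraw_term_sum[OF n(1)] kraw_leading_factor[OF n]
    by (simp add: S_def S'_def a_def c_def algebra_simps)
  also have "\<dots> = c * (- (a * C - D)) * (S + real n / (f - 1) * (S - S'))"
    unfolding f1 using aCD assms(3) n(1) by (simp add: field_simps)
  finally show ?thesis
    unfolding Let_def a_def[symmetric] mult.assoc[of "real n" p] f_def[symmetric] c_def[symmetric] series .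
qed

theorem mainTheorem3:
  fixes N n j :: nat and p lam mu x :: real
  assumes "1 \<le> N" and "0 < p" and "p < 1" and "0 < lam" and "0 < mu"
    and "1 \<le> n" and "n \<le> N"
    and "falling x (j + 1) \<noteq> 0" and "falling (x - real N) (j + 1) \<noteq> 0"
    and "calD1 N p lam mu j n x \<noteq> 0"
    and "\<forall>i<n. (real n * p * real (N - n + 1) * calC1 N p lam mu j n x / calD1 N p lam mu j n x
                 - real n + 1) - 1 \<noteq> - real i"
  shows "(let f = real n * p * real (N - n + 1) * calC1 N p lam mu j n x / calD1 N p lam mu j n x
                 - real n + 1;
              h = - (p * real (N - n + 1) * calC1 N p lam mu j n x - calD1 N p lam mu j n x)
          in poly (KS N p lam mu j n) x =
             p ^ (n - 1) * pochhammer (- real N) (n - 1) * h *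
             (\<Sum>k\<le>n. pochhammer (- real n) k * pochhammer (- x) k * pochhammer f k
                      / (pochhammer (- real N) k * pochhammer (f - 1) k) * (1 / p) ^ k / fact k))"
  using poly_KS_eq_calC1_calD1[OF assms(6,7,2,3) _ _ assms(8,9)] assms(4,5)
    kraw_combination_hypergeometric[OF assms(6,7,10,11)]
  by (simp add: Let_def)

end
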